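(* Let $p,q$ be positive integers with $1<q<p-q$, $\gcd(p,q)=1$, and $A=\langle q,p-q\rangle$. Let $((\mathbb{Z},G_{0,j}^+),f_{0,j})_{j\ge0}$ be a directed system of simple components with $G_{0,0}^+=A$, where each $f_{0,j}\colon(\mathbb{Z},G_{0,j}^+)\to(\mathbb{Z},G_{0,j+1}^+)$ is an order-embedding given by multiplication by a positive integer $n_j$, and let $(H,H^+)$ be its direct limit. Let $\mathfrak{n}=\prod_{j\ge0}n_j$, and suppose $r>q$ is a positive integer coprime with $\mathfrak{n}$ and $s\in A$ satisfies $\gcd(r,s)=1$ and $r<s-r$; put $B=\langle r,s-r\rangle$. Define $G_{i,0}^+=rG_{i-1,0}^++s^iB$ for $i>0$ and $G_{i,j}^+=rG_{i-1,j}^++n_{j-1}G_{i,j-1}^+$ for $i,j>0$. Let $f_{i,j}\colon(\mathbb{Z},G_{i,j}^+)\to(\mathbb{Z},G_{i,j+1}^+)$ be multiplication by $n_j$ and $g_{i,j}\colon(\mathbb{Z},G_{i,j}^+)\to(\mathbb{Z},G_{i+1,j}^+)$ multiplication by $r$; let $G_i^+=G_{i,i}^+$ and $f_i\colon(\mathbb{Z},G_i^+)\to(\mathbb{Z},G_{i+1}^+)$ be multiplication by $rn_i$. Let $(K,K^+)=\varinjlim((\mathbb{Z},G_{i,0}^+),g_{i,0})$. Then: (i) $(\mathbb{Z},G_{i,j}^+)$ is a simple component for all $i,j$; (ii) all $f_{i,j}$ and $g_{i,j}$ are order-embeddings; (iii) the direct limit $(G,G^+)$ of $((\mathbb{Z},G_i^+),f_i)$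 is a simple partially ordered group of rank one, and there are order-embeddings $(H,H^+)\to(G,G^+)$ and $(K,K^+)\to(G,G^+)$; (iv) there is an interval $D_r\subseteq G^+$ with $tD_r\neq G^+$ for every positive integer $t\le r-1$ and $rD_r=G^+$.
   Context: $\langle a_1,\dots,a_k\rangle$: submonoid of $\mathbb{Z}^+$ generated by the $a_i$; for subsets $X,Y\subseteq\mathbb{Z}$ and integers $m$, $mX+Y=\{mx+y\}$. A simple component is a simple partially ordered abelian group $(\mathbb{Z},P)$ (simple: every nonzero positive element $u$ is an order-unit, i.e. for all $x$ there is $n$ with $-nu\le x\le nu$). Order-embedding: injective homomorphism with $f(G^+)=f(G)\cap H^+$. Rank one: isomorphic to a nonzero subgroup of $\mathbb{Q}$. Direct limits carry as positive cone the union of images of positive cones. The generalized integer $\prod_j n_j$ assigns to each prime $\ell$ the (possibly infinite) sum of the exponents of $\ell$ in the $n_j$; $r$ coprime with it means no prime divisor of $r$ divides any $n_j$. An interval in $G^+$ is a nonempty, upward directed, order-hereditary subset of $G^+$; $X+Y=\{z\in G^+: z\le x+y,\ x\in X,\ y\in Y\}$ and $tX$ is the $t$-fold sum. *)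

theory Defs
  imports Complex_Main "HOL-Computational_Algebra.Primes"
begin

inductive_set monoid_gen :: "int set \<Rightarrow> int set" for S :: "int set" where
  zero: "0 \<in> monoid_gen S"
| gen: "a \<in> S \<Longrightarrow> a \<in> monoid_gen S"
| add: "x \<in> monoid_gen S \<Longrightarrow> y \<in> monoid_gen S \<Longrightarrow> x + y \<in> monoid_gen S"

definition lin2 :: "int \<Rightarrow> int set \<Rightarrow> int \<Rightarrow> int set \<Rightarrow> int set" where
  "lin2 a X b Y = {a * x + b * y | x y. x \<in> X \<and> y \<in> Y}"

definition po_group :: "'a::comm_ring_1 set \<Rightarrow> 'a set \<Rightarrow> bool" where
  "po_group G P \<longleftrightarrow>
     0 \<in> G \<and> (\<forall>x\<in>G. \<forall>y\<in>G. x + y \<in> G) \<and> (\<forall>x\<in>G. - x \<in> G) \<and>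
     P \<subseteq> G \<and> 0 \<in> P \<and> (\<forall>x\<in>P. \<forall>y\<in>P. x + y \<in> P) \<and>
     (\<forall>x. x \<in> P \<and> - x \<in> P \<longrightarrow> x = 0)"

definition order_unit :: "'a::comm_ring_1 set \<Rightarrow> 'a set \<Rightarrow> 'a \<Rightarrow> bool" where
  "order_unit G P u \<longleftrightarrow> u \<in> P \<and>
     (\<forall>x\<in>G. \<exists>n::nat. of_nat n * u - x \<in> P \<and> x + of_nat n * u \<in> P)"

definition simple_po_group :: "'a::comm_ring_1 set \<Rightarrow> 'a set \<Rightarrow> bool" where
  "simple_po_group G P \<longleftrightarrow> po_group G P \<and> (\<forall>u\<in>P. u \<noteq> 0 \<longrightarrow> order_unit G P u)"

definition simple_component :: "int set \<Rightarrow> bool" where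
  "simple_component P \<longleftrightarrow> simple_po_group (UNIV :: int set) P"

definition group_hom_on :: "'a::ab_group_add set \<Rightarrow> ('a \<Rightarrow> 'b::ab_group_add) \<Rightarrow> bool" where
  "group_hom_on G f \<longleftrightarrow> (\<forall>x\<in>G. \<forall>y\<in>G. f (x + y) = f x + f y)"

definition order_embedding ::
  "'a::ab_group_add set \<Rightarrow> 'a set \<Rightarrow> 'b::ab_group_add set \<Rightarrow> 'b set \<Rightarrow> ('a \<Rightarrow> 'b) \<Rightarrow> bool" where
  "order_embedding G P H Q f \<longleftrightarrow>
     group_hom_on G f \<and> f ` G \<subseteq> H \<and> inj_on f G \<and> f ` P = f ` G \<inter> Q"

definition rank_one :: "'a::ab_group_add set \<Rightarrow> bool" where
  "rank_one G \<longleftrightarrow> (\<exists>f :: 'a \<Rightarrow> rat. group_hom_on G f \<and> inj_on f G \<and> f ` G \<noteq> {0})"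

text \<open>The direct limit of ((Z, P_j), multiplication by m_j), m_j positive integers, realised
  concretely inside Q: the element x at stage j is sent to x / (m_0 \<cdots> m_(j-1)).\<close>
definition dlim_group :: "(nat \<Rightarrow> int) \<Rightarrow> rat set" where
  "dlim_group m = {of_int x / of_int (\<Prod>k<j. m k) | x j. True}"

definition dlim_cone :: "(nat \<Rightarrow> int set) \<Rightarrow> (nat \<Rightarrow> int) \<Rightarrow> rat set" where
  "dlim_cone P m = {of_int x / of_int (\<Prod>k<j. m k) | x j. x \<in> P j}"

definition po_le :: "'a::ab_group_add set \<Rightarrow> 'a \<Rightarrow> 'a \<Rightarrow> bool" where
  "po_le P x y \<longleftrightarrow> y - x \<in> P"

definition is_interval :: "'a::ab_group_add set \<Rightarrow> 'a set \<Rightarrow> bool" where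
  "is_interval P D \<longleftrightarrow> D \<subseteq> P \<and> D \<noteq> {} \<and>
     (\<forall>x\<in>D. \<forall>y\<in>D. \<exists>z\<in>D. po_le P x z \<and> po_le P y z) \<and>
     (\<forall>x\<in>D. \<forall>y\<in>P. po_le P y x \<longrightarrow> y \<in> D)"

definition iv_sum :: "'a::ab_group_add set \<Rightarrow> 'a set \<Rightarrow> 'a set \<Rightarrow> 'a set" where
  "iv_sum P X Y = {z \<in> P. \<exists>x\<in>X. \<exists>y\<in>Y. po_le P z (x + y)}"

primrec iv_mult :: "'a::ab_group_add set \<Rightarrow> 'a set \<Rightarrow> nat \<Rightarrow> 'a set" where
  "iv_mult P X 0 = {0}"
| "iv_mult P X (Suc t) = iv_sum P (iv_mult P X t) X"

text \<open>r coprime with the generalized integer prod_j n_j.\<close>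
definition coprime_gen :: "int \<Rightarrow> (nat \<Rightarrow> int) \<Rightarrow> bool" where
  "coprime_gen r n \<longleftrightarrow> (\<forall>l::int. prime l \<and> l dvd r \<longrightarrow> (\<forall>j. \<not> l dvd n j))"

end

theory Submission
  imports Defs
begin

text \<open>Every G i j is a numerical monoid (a submonoid of the nonnegative integers with finite
  complement), since aX + bY is again one when X and Y are and gcd a b = 1; hence it is simple.
  Membership in G i j is decided by cancelling the factor r or n j, which is prime to the other
  coefficient of the recursion; this gives the order-embeddings. A direct limit of simple
  components along order-embeddings is simple, and in the rational model of the limits the maps
  from H and K are inclusions.

  For (iv) take D = {z. z \<le> w k for some k} with w k = r \<sigma>^(k+1), \<sigma> = s / r. The increments
  r (w (k+1) - w k) grow, so r w k eventually dominates every positive element and rD = G^+. On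
  the other hand, each element of G^+ is a rational with denominator prime to r plus a sum of
  terms \<sigma>^i b, b \<in> B; an r-adic descent on k shows that t w k - r s is never of this form when
  t < r, so r s \<notin> tD.\<close>

locale positive_cone =
  fixes P :: "'a::comm_ring_1 set"
  assumes zero_mem: "0 \<in> P"
    and add_mem: "x \<in> P \<Longrightarrow> y \<in> P \<Longrightarrow> x + y \<in> P"
begin

lemma of_nat_mult_mem: "x \<in> P \<Longrightarrow> of_nat k * x \<in> P"
  by (induction k) (simp_all add: zero_mem add_mem algebra_simps)

lemma po_le_refl: "po_le P x x"
  by (simp add: po_le_def zero_mem)

lemma po_le_trans: "po_le P x y \<Longrightarrow> po_le P y z \<Longrightarrow> po_le P x z"
  unfolding po_le_def using add_mem[of "z - y" "y - x"] by simp

lemma po_le_add: "po_le P x x' \<Longrightarrow> po_le P y y' \<Longrightarrow> po_le P (x + y) (x' + y')"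
  unfolding po_le_def using add_mem[of "x' - x" "y' - y"] by (simp add: algebra_simps)

lemma po_le_of_nat_mult: "po_le P x y \<Longrightarrow> po_le P (of_nat k * x) (of_nat k * y)"
  unfolding po_le_def using of_nat_mult_mem[of "y - x" k] by (simp add: algebra_simps)

lemma po_le_chain_mono:
  assumes "\<And>k. po_le P (w k) (w (Suc k))" "k \<le> k'"
  shows "po_le P (w k) (w k')"
  using assms(2)
proof (induction k' rule: dec_induct)
  case (step k')
  then show ?case using assms(1) po_le_trans by blast
qed (rule po_le_refl)

lemma is_interval_below_chain:
  assumes w: "\<And>k. w k \<in> P" and chain: "\<And>k. po_le P (w k) (w (Suc k))"
  shows "is_interval P {z \<in> P. \<exists>k. po_le P z (w k)}"
  unfolding is_interval_def
proof (intro conjI ballI impI)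
  show "{z \<in> P. \<exists>k. po_le P z (w k)} \<noteq> {}"
    using w po_le_refl by blast
  fix x y assume "x \<in> {z \<in> P. \<exists>k. po_le P z (w k)}" "y \<in> {z \<in> P. \<exists>k. po_le P z (w k)}"
  then obtain a b where "po_le P x (w a)" "po_le P y (w b)" by blast
  then have "po_le P x (w (max a b))" "po_le P y (w (max a b))"
    using po_le_trans po_le_chain_mono[of w, OF chain] by (meson max.cobounded1 max.cobounded2)+
  then show "\<exists>z\<in>{z \<in> P. \<exists>k. po_le P z (w k)}. po_le P x z \<and> po_le P y z"
    using w po_le_refl by blast
next
  fix x y assume "x \<in> {z \<in> P. \<exists>k. po_le P z (w k)}" "y \<in> P" "po_le P y x"
  then show "y \<in> {z \<in> P. \<exists>k. po_le P z (w k)}" using po_le_trans by blast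
qed blast

lemma iv_sum_below_chain:
  assumes w: "\<And>k. w k \<in> P" and chain: "\<And>k. po_le P (w k) (w (Suc k))"
  shows "iv_sum P {z \<in> P. \<exists>k. po_le P z (of_nat t * w k)} {z \<in> P. \<exists>k. po_le P z (w k)}
    = {z \<in> P. \<exists>k. po_le P z (of_nat (Suc t) * w k)}"
proof (intro equalityI subsetI)
  fix z assume "z \<in> iv_sum P {z \<in> P. \<exists>k. po_le P z (of_nat t * w k)} {z \<in> P. \<exists>k. po_le P z (w k)}"
  then obtain x y a b where z: "z \<in> P" "po_le P z (x + y)"
    and a: "po_le P x (of_nat t * w a)" and b: "po_le P y (w b)"
    unfolding iv_sum_def by blast
  define m where "m = max a b"
  have "po_le P x (of_nat t * w m)"
    using po_le_trans[OF a po_le_of_nat_mult[OF po_le_chain_mono[of w, OF chain]]] by (simp add: m_def)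
  moreover have "po_le P y (w m)"
    using po_le_trans[OF b po_le_chain_mono[of w, OF chain]] by (simp add: m_def)
  ultimately have "po_le P z (of_nat t * w m + w m)"
    using po_le_trans[OF z(2) po_le_add] by blast
  then show "z \<in> {z \<in> P. \<exists>k. po_le P z (of_nat (Suc t) * w k)}"
    using z(1) by (auto simp: algebra_simps)
next
  fix z assume "z \<in> {z \<in> P. \<exists>k. po_le P z (of_nat (Suc t) * w k)}"
  then obtain k where "z \<in> P" "po_le P z (of_nat t * w k + w k)"
    by (auto simp: algebra_simps)
  moreover have "of_nat t * w k \<in> {z \<in> P. \<exists>k. po_le P z (of_nat t * w k)}"
    using of_nat_mult_mem w po_le_refl by blast
  moreover have "w k \<in> {z \<in> P. \<exists>k. po_le P z (w k)}" using w po_le_refl by blast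
  ultimately show "z \<in> iv_sum P {z \<in> P. \<exists>k. po_le P z (of_nat t * w k)} {z \<in> P. \<exists>k. po_le P z (w k)}"
    unfolding iv_sum_def by blast
qed

lemma iv_mult_below_chain:
  assumes w: "\<And>k. w k \<in> P" and chain: "\<And>k. po_le P (w k) (w (Suc k))"
  shows "iv_mult P {z \<in> P. \<exists>k. po_le P z (w k)} (Suc t) = {z \<in> P. \<exists>k. po_le P z (of_nat (Suc t) * w k)}"
proof (induction t)
  case 0
  show ?case
  proof (intro equalityI subsetI)
    fix z assume "z \<in> iv_mult P {z \<in> P. \<exists>k. po_le P z (w k)} (Suc 0)"
    then obtain y k where "z \<in> P" "po_le P z y" "po_le P y (w k)"
      unfolding iv_mult.simps iv_sum_def by auto
    then show "z \<in> {z \<in> P. \<exists>k. po_le P z (of_nat (Suc 0) * w k)}"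
      using po_le_trans by auto
  next
    fix z assume "z \<in> {z \<in> P. \<exists>k. po_le P z (of_nat (Suc 0) * w k)}"
    then obtain k where "z \<in> P" "po_le P z (0 + w k)" by auto
    moreover have "w k \<in> {z \<in> P. \<exists>k. po_le P z (w k)}" using w po_le_refl by blast
    ultimately show "z \<in> iv_mult P {z \<in> P. \<exists>k. po_le P z (w k)} (Suc 0)"
      unfolding iv_mult.simps iv_sum_def by blast
  qed
next
  case (Suc t)
  then show ?case
    unfolding iv_mult.simps(2)[of _ _ "Suc t"] by (simp only: iv_sum_below_chain[of w, OF w chain])
qed

end

section \<open>Numerical monoids\<close>

lemma positive_cone_int_mult_mem:
  fixes P :: "int set"
  assumes "positive_cone P" "x \<in> P" "0 \<le> k"
  shows "k * x \<in> P"
  using positive_cone.of_nat_mult_mem[OF assms(1,2), of "nat k"] assms(3) by simp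

definition numerical_monoid :: "int set \<Rightarrow> bool" where
  "numerical_monoid P \<longleftrightarrow> positive_cone P \<and> (\<forall>x\<in>P. 0 \<le> x) \<and> (\<exists>N. \<forall>x\<ge>N. x \<in> P)"

lemma numerical_monoid_cofinite:
  assumes "numerical_monoid P"
  obtains N where "0 \<le> N" "\<And>x. N \<le> x \<Longrightarrow> x \<in> P"
proof -
  obtain N where "\<forall>x\<ge>N. x \<in> P" using assms unfolding numerical_monoid_def by blast
  then show ?thesis using that[of "\<bar>N\<bar>"] by simp
qed

lemma numerical_monoid_imp_simple_component:
  assumes "numerical_monoid P"
  shows "simple_component P"
proof -
  obtain N where N: "\<forall>x\<ge>N. x \<in> P" and cone: "positive_cone P" and nonneg: "\<forall>x\<in>P. 0 \<le> x"
    using assms unfolding numerical_monoid_def by blast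
  have "x = 0" if "x \<in> P" "- x \<in> P" for x
  proof -
    have "0 \<le> x" "0 \<le> - x" using nonneg that by blast+
    then show ?thesis by simp
  qed
  then have "po_group UNIV P"
    using cone unfolding po_group_def positive_cone_def by blast
  moreover have "order_unit UNIV P u" if "u \<in> P" "u \<noteq> 0" for u
  proof -
    have "1 \<le> u" using nonneg that by force
    have "of_nat k * u - x \<in> P \<and> x + of_nat k * u \<in> P" if "k = nat (\<bar>N\<bar> + \<bar>x\<bar>)" for k x
    proof -
      have "int k \<le> int k * u" using \<open>1 \<le> u\<close> by (simp add: mult_le_cancel_left1)
      then show ?thesis using N that by simp
    qed
    then show ?thesis unfolding order_unit_def using \<open>u \<in> P\<close> by blast
  qed
  ultimately show ?thesis unfolding simple_component_def simple_po_group_def by blast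
qed

lemma consecutive_mem_imp_cofinite:
  fixes P :: "int set"
  assumes cone: "positive_cone P" and c: "c \<in> P" "c + 1 \<in> P" "1 \<le> c" and x: "c * c \<le> x"
  shows "x \<in> P"
proof -
  define a b where "a = x div c" and "b = x mod c"
  have xab: "x = a * c + b" and b: "0 \<le> b" "b < c"
    using c(3) by (simp_all add: a_def b_def)
  have "c \<le> a"
  proof (rule ccontr)
    assume "\<not> c \<le> a"
    then have "a * c \<le> (c - 1) * c" using c(3) by (simp add: mult_right_mono)
    then show False using x xab b by (simp add: algebra_simps)
  qed
  then have "x = (a - b) * c + b * (c + 1)" and "0 \<le> a - b"
    using xab b by (simp_all add: algebra_simps)
  then show ?thesis
    using positive_cone.add_mem[OF cone] positive_cone_int_mult_mem[OF cone] c b by metis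
qed

lemma simple_component_imp_numerical_monoid:
  assumes simple: "simple_component P" and u: "u \<in> P" "0 < u"
  shows "numerical_monoid P"
proof -
  have po: "po_group UNIV P" and unit: "order_unit UNIV P u"
    using assms unfolding simple_component_def simple_po_group_def by auto
  then have cone: "positive_cone P"
    unfolding po_group_def positive_cone_def by blast
  have nonneg: "0 \<le> v" if "v \<in> P" for v
  proof (rule ccontr)
    assume "\<not> 0 \<le> v"
    have "(- v) * u \<in> P" "u * v \<in> P"
      using positive_cone_int_mult_mem[OF cone u(1), of "- v"] positive_cone_int_mult_mem[OF cone that, of u]
        u \<open>\<not> 0 \<le> v\<close> by simp_all
    moreover have "- ((- v) * u) = u * v" by simp
    ultimately have "(- v) * u = 0" using po unfolding po_group_def by metis
    then show False using u \<open>\<not> 0 \<le> v\<close> by simp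
  qed
  obtain k :: nat where k: "of_nat k * u - 1 \<in> P"
    using unit unfolding order_unit_def by blast
  have ku: "(of_nat k * u - 1) + 1 \<in> P"
    using positive_cone.of_nat_mult_mem[OF cone u(1)] by simp
  have "\<exists>N. \<forall>x\<ge>N. x \<in> P"
  proof (cases "of_nat k * u - 1 = 0")
    case True
    then have "1 \<in> P" using ku by simp
    then show ?thesis using positive_cone_int_mult_mem[OF cone, of 1] by auto
  next
    case False
    then have "1 \<le> of_nat k * u - 1" using nonneg[OF k] by linarith
    then show ?thesis using consecutive_mem_imp_cofinite[OF cone k ku] by blast
  qed
  then show ?thesis unfolding numerical_monoid_def using cone nonneg by blast
qed

lemma lin2_commute: "lin2 a X b Y = lin2 b Y a X"
  unfolding lin2_def by (auto simp: add.commute)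

lemma mem_lin2I: "x \<in> X \<Longrightarrow> y \<in> Y \<Longrightarrow> a * x + b * y \<in> lin2 a X b Y"
  unfolding lin2_def by blast

lemma mult_mem_lin2I: "x \<in> X \<Longrightarrow> 0 \<in> Y \<Longrightarrow> a * x \<in> lin2 a X b Y"
  using mem_lin2I[of x X 0 Y a b] by simp

lemma mult_mem_lin2D:
  assumes "a * x \<in> lin2 a X b Y" "coprime a b" "a \<noteq> 0"
  obtains x' y where "x' \<in> X" "a * y \<in> Y" "x = x' + b * y"
proof -
  obtain x' y' where xy: "a * x = a * x' + b * y'" "x' \<in> X" "y' \<in> Y"
    using assms(1) unfolding lin2_def by blast
  then have "a dvd b * y'" by (metis add_diff_cancel_left' dvd_diff dvd_triv_left)
  then obtain y where y: "y' = a * y"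
    using assms(2) by (metis coprime_dvd_mult_right_iff dvdE)
  then have "a * x = a * (x' + b * y)" using xy(1) by (simp add: algebra_simps)
  then have "x = x' + b * y" using assms(3) by simp
  then show ?thesis using that xy y by blast
qed

lemma positive_cone_lin2:
  assumes "positive_cone X" "positive_cone Y"
  shows "positive_cone (lin2 a X b Y)"
proof
  show "0 \<in> lin2 a X b Y"
    using mem_lin2I[of 0 X 0 Y a b] assms by (simp add: positive_cone.zero_mem)
  fix z z' assume "z \<in> lin2 a X b Y" "z' \<in> lin2 a X b Y"
  then obtain x y x' y' where "z = a * x + b * y" "z' = a * x' + b * y'"
    "x \<in> X" "y \<in> Y" "x' \<in> X" "y' \<in> Y"
    unfolding lin2_def by blast
  then show "z + z' \<in> lin2 a X b Y"
    using mem_lin2I[of "x + x'" X "y + y'" Y a b] positive_cone.add_mem[OF assms(1)]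
      positive_cone.add_mem[OF assms(2)] by (simp add: algebra_simps)
qed

lemma lin2_cofinite:
  assumes N1: "0 \<le> N1" "\<And>x. N1 \<le> x \<Longrightarrow> x \<in> X" and N2: "0 \<le> N2" "\<And>y. N2 \<le> y \<Longrightarrow> y \<in> Y"
    and ab: "0 < a" "0 < b" "coprime a b"
    and M: "a * N1 + b * (N2 + a) \<le> M"
  shows "M \<in> lin2 a X b Y"
proof -
  obtain u v where uv: "u * a + v * b = 1"
    using ab(3) by (metis bezout_int coprime_iff_gcd_eq_1)
  define y where "y = N2 + (v * M - N2) mod a"
  have y: "N2 \<le> y" "y < N2 + a" using ab(1) by (simp_all add: y_def)
  define k where "k = (v * M - N2) div a"
  have k: "v * M = y + a * k"
    using mult_div_mod_eq[of a "v * M - N2"] unfolding y_def k_def by linarith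
  define x where "x = u * M + b * k"
  have Mx: "M = a * x + b * y"
  proof -
    have "M = (u * a + v * b) * M" using uv by simp
    also have "\<dots> = a * (u * M) + b * (v * M)" by (simp add: algebra_simps)
    also have "\<dots> = a * x + b * y" unfolding k x_def by (simp add: algebra_simps)
    finally show ?thesis .
  qed
  have "b * y < b * (N2 + a)" using y(2) ab(2) by simp
  then have "a * N1 < a * x" using M Mx by linarith
  then have "x \<in> X" using N1(2) ab(1) by simp
  then show ?thesis using Mx N2(2) y(1) mem_lin2I by metis
qed

lemma numerical_monoid_lin2:
  assumes X: "numerical_monoid X" and Y: "numerical_monoid Y"
    and ab: "0 < a" "0 < b" "coprime a b"
  shows "numerical_monoid (lin2 a X b Y)"
proof -
  obtain N1 N2 where N1: "0 \<le> N1" "\<And>x. N1 \<le> x \<Longrightarrow> x \<in> X"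
    and N2: "0 \<le> N2" "\<And>y. N2 \<le> y \<Longrightarrow> y \<in> Y"
    using numerical_monoid_cofinite[OF X] numerical_monoid_cofinite[OF Y] by metis
  have "\<exists>N. \<forall>M\<ge>N. M \<in> lin2 a X b Y"
    using lin2_cofinite[OF N1 N2 ab] by blast
  moreover have "0 \<le> z" if z: "z \<in> lin2 a X b Y" for z
  proof -
    obtain x y where "z = a * x + b * y" "x \<in> X" "y \<in> Y" using z unfolding lin2_def by blast
    moreover have "0 \<le> x" "0 \<le> y" using calculation X Y unfolding numerical_monoid_def by blast+
    ultimately show ?thesis using ab by simp
  qed
  moreover have "positive_cone (lin2 a X b Y)"
    using positive_cone_lin2 X Y unfolding numerical_monoid_def by blast
  ultimately show ?thesis unfolding numerical_monoid_def by blast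
qed

lemma positive_cone_monoid_gen: "positive_cone (monoid_gen S)"
  by unfold_locales (auto intro: monoid_gen.intros)

lemma monoid_gen_pair_eq_lin2: "monoid_gen {a, b} = lin2 a {0..} b {0..}"
proof
  show "monoid_gen {a, b} \<subseteq> lin2 a {0..} b {0..}"
  proof
    fix z assume "z \<in> monoid_gen {a, b}"
    then show "z \<in> lin2 a {0..} b {0..}"
    proof induction
      case zero
      show ?case using mem_lin2I[of 0 "{0..}" 0 "{0..}" a b] by simp
    next
      case (gen z)
      then show ?case using mem_lin2I[of 1 "{0..}" 0 "{0..}" a b] mem_lin2I[of 0 "{0..}" 1 "{0..}" a b] by auto
    next
      case (add z z')
      have "positive_cone {0::int..}" by unfold_locales auto
      then show ?case using add positive_cone.add_mem[OF positive_cone_lin2] by blast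
    qed
  qed
  show "lin2 a {0..} b {0..} \<subseteq> monoid_gen {a, b}"
  proof
    fix z assume "z \<in> lin2 a {0..} b {0..}"
    then obtain i j where z: "z = a * i + b * j" "0 \<le> i" "0 \<le> j"
      unfolding lin2_def by auto
    have "a \<in> monoid_gen {a, b}" "b \<in> monoid_gen {a, b}" by (auto intro: monoid_gen.gen)
    then have "i * a \<in> monoid_gen {a, b}" "j * b \<in> monoid_gen {a, b}"
      using positive_cone_int_mult_mem[OF positive_cone_monoid_gen] z by blast+
    then show "z \<in> monoid_gen {a, b}" using z(1) by (metis monoid_gen.add mult.commute)
  qed
qed

lemma numerical_monoid_monoid_gen_pair:
  assumes "0 < a" "0 < b" "coprime a b"
  shows "numerical_monoid (monoid_gen {a, b})"
proof -
  have "numerical_monoid {0..}"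
    unfolding numerical_monoid_def positive_cone_def by auto
  then show ?thesis
    unfolding monoid_gen_pair_eq_lin2 using numerical_monoid_lin2 assms by blast
qed

lemma monoid_gen_pair_diff_mem:
  assumes x: "x \<in> monoid_gen {a, c}" and "coprime a c" "a dvd x - t * c" "0 \<le> t" "t < a"
  shows "x - t * c \<in> monoid_gen {a, c}"
proof -
  obtain \<alpha> \<beta> where \<alpha>\<beta>: "x = a * \<alpha> + c * \<beta>" "0 \<le> \<alpha>" "0 \<le> \<beta>"
    using x unfolding monoid_gen_pair_eq_lin2 lin2_def by auto
  have "x - t * c = a * \<alpha> + (\<beta> - t) * c" using \<alpha>\<beta>(1) by (simp add: algebra_simps)
  then have "a dvd (\<beta> - t) * c" using assms(3) by (metis add_diff_cancel_left' dvd_diff dvd_triv_left)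
  then have "a dvd t - \<beta>" using assms(2) by (metis coprime_dvd_mult_left_iff dvd_minus_iff minus_diff_eq)
  have "t \<le> \<beta>"
  proof (rule ccontr)
    assume "\<not> t \<le> \<beta>"
    then have "0 < t - \<beta>" "t - \<beta> < a" using assms(5) \<alpha>\<beta>(3) by linarith+
    then show False using zdvd_not_zless \<open>a dvd t - \<beta>\<close> by blast
  qed
  then have "x - t * c = a * \<alpha> + c * (\<beta> - t)" using \<alpha>\<beta>(1) by (simp add: algebra_simps)
  then show ?thesis
    unfolding monoid_gen_pair_eq_lin2 using mem_lin2I \<alpha>\<beta>(2) \<open>t \<le> \<beta>\<close> by force
qed

lemma coprime_gen_imp_coprime:
  assumes "coprime_gen r n"
  shows "coprime r (n j)"
proof (rule ccontr)
  assume "\<not> coprime r (n j)"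
  then obtain c where c: "c dvd r" "c dvd n j" "\<not> is_unit c" by (rule not_coprimeE)
  then have "\<bar>c\<bar> \<noteq> 1" by auto
  then obtain l where "prime l" "l dvd c" by (rule prime_factor_int)
  then show False using assms c unfolding coprime_gen_def by (meson dvd_trans)
qed

definition coprime_denom :: "int \<Rightarrow> rat \<Rightarrow> bool" where
  "coprime_denom r z \<longleftrightarrow> (\<exists>a d. 0 < d \<and> coprime d r \<and> z = of_int a / of_int d)"

lemma coprime_denom_of_int: "coprime_denom r (of_int a)"
  unfolding coprime_denom_def by (rule exI[of _ a], rule exI[of _ 1]) simp

lemma coprime_denom_add:
  assumes "coprime_denom r z" "coprime_denom r z'"
  shows "coprime_denom r (z + z')"
proof -
  obtain a d a' d' where "0 < d" "coprime d r" "z = of_int a / of_int d"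
    "0 < d'" "coprime d' r" "z' = of_int a' / of_int d'"
    using assms unfolding coprime_denom_def by blast
  then have "0 < d * d'" "coprime (d * d') r" "z + z' = of_int (a * d' + a' * d) / of_int (d * d')"
    by (simp_all add: field_simps)
  then show ?thesis unfolding coprime_denom_def by blast
qed

lemma coprime_denom_mult_of_int:
  assumes "coprime_denom r z"
  shows "coprime_denom r (of_int k * z)"
proof -
  obtain a d where "0 < d" "coprime d r" "z = of_int a / of_int d"
    using assms unfolding coprime_denom_def by blast
  moreover have "of_int k * (of_int a / of_int d) = (of_int (k * a) / of_int d :: rat)" by simp
  ultimately show ?thesis unfolding coprime_denom_def by metis
qed

lemma coprime_denom_diff:
  "coprime_denom r z \<Longrightarrow> coprime_denom r z' \<Longrightarrow> coprime_denom r (z - z')"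
  using coprime_denom_add[of r z "of_int (- 1) * z'"] coprime_denom_mult_of_int[of r z' "- 1"] by simp

lemma coprime_denom_imp_dvd:
  assumes "r \<noteq> 0" "coprime_denom r (of_int c / of_int r)"
  shows "r dvd c"
proof -
  obtain a d where d: "0 < d" "coprime d r" "of_int c / of_int r = (of_int a / of_int d :: rat)"
    using assms(2) unfolding coprime_denom_def by blast
  then have "c * d = a * r"
    using assms(1) by (simp add: frac_eq_eq flip: of_int_mult of_int_eq_iff)
  then show ?thesis
    using d(2) by (metis coprime_commute coprime_dvd_mult_left_iff dvd_triv_right)
qed

section \<open>Direct limits along multiplication maps\<close>

lemma order_embedding_mult_iff:
  fixes c :: int
  assumes "c \<noteq> 0"
  shows "order_embedding UNIV P UNIV Q (\<lambda>x. c * x) \<longleftrightarrow> (\<forall>x. x \<in> P \<longleftrightarrow> c * x \<in> Q)"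
proof -
  have inj: "inj (\<lambda>x. c * x)" using assms by (auto intro: injI)
  moreover have "group_hom_on UNIV (\<lambda>x. c * x)"
    unfolding group_hom_on_def by (simp add: algebra_simps)
  moreover have "(\<lambda>x. c * x) ` P = range (\<lambda>x. c * x) \<inter> Q \<longleftrightarrow> (\<forall>x. x \<in> P \<longleftrightarrow> c * x \<in> Q)"
  proof
    assume "(\<lambda>x. c * x) ` P = range (\<lambda>x. c * x) \<inter> Q"
    then have "c * x \<in> (\<lambda>x. c * x) ` P \<longleftrightarrow> c * x \<in> Q" for x by blast
    then show "\<forall>x. x \<in> P \<longleftrightarrow> c * x \<in> Q" using inj by (simp add: inj_image_mem_iff)
  qed auto
  ultimately show ?thesis unfolding order_embedding_def by auto
qed

lemma order_embedding_inclusion: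
  "order_embedding G P H Q (\<lambda>x. x) \<longleftrightarrow> G \<subseteq> H \<and> P = G \<inter> Q"
  unfolding order_embedding_def group_hom_on_def by simp

definition embedding_system :: "(nat \<Rightarrow> int set) \<Rightarrow> (nat \<Rightarrow> int) \<Rightarrow> bool" where
  "embedding_system P m \<longleftrightarrow> (\<forall>j. 0 < m j) \<and> (\<forall>j x. x \<in> P j \<longleftrightarrow> m j * x \<in> P (Suc j))"

lemma embedding_system_iff_order_embedding:
  "embedding_system P m \<longleftrightarrow>
     (\<forall>j. 0 < m j \<and> order_embedding UNIV (P j) UNIV (P (Suc j)) (\<lambda>x. m j * x))"
  unfolding embedding_system_def using order_embedding_mult_iff
  by (metis less_irrefl)

lemma embedding_system_nonzero: "embedding_system P m \<Longrightarrow> \<forall>k. m k \<noteq> 0"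
  unfolding embedding_system_def by (metis less_irrefl)

lemma embedding_system_iter:
  assumes "embedding_system P m"
  shows "x \<in> P j \<longleftrightarrow> (\<Prod>k\<in>{j..<j + d}. m k) * x \<in> P (j + d)"
proof (induction d arbitrary: x)
  case (Suc d)
  have "x \<in> P j \<longleftrightarrow> (\<Prod>k\<in>{j..<j + d}. m k) * x \<in> P (j + d)" by (rule Suc.IH)
  also have "\<dots> \<longleftrightarrow> m (j + d) * ((\<Prod>k\<in>{j..<j + d}. m k) * x) \<in> P (Suc (j + d))"
    using assms unfolding embedding_system_def by blast
  finally show ?case by (simp add: prod.atLeastLessThan_Suc ac_simps)
qed simp

lemma prod_lessThan_add:
  fixes f :: "nat \<Rightarrow> 'a::comm_monoid_mult"
  shows "(\<Prod>k<j + d. f k) = (\<Prod>k<j. f k) * (\<Prod>k\<in>{j..<j + d}. f k)"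
  using prod.atLeastLessThan_concat[of 0 j "j + d" f] by (simp add: lessThan_atLeast0)

lemma dlim_fraction_lift:
  fixes m :: "nat \<Rightarrow> int"
  assumes "\<forall>k. m k \<noteq> 0"
  shows "of_int x / of_int (\<Prod>k<j. m k)
           = (of_int ((\<Prod>k\<in>{j..<j + d}. m k) * x) / of_int (\<Prod>k<j + d. m k) :: rat)"
proof -
  have nz: "(\<Prod>k\<in>A. m k) \<noteq> 0" for A
    using assms by (induction A rule: infinite_finite_induct) auto
  have "of_int x / of_int a = (of_int (b * x) / of_int (a * b) :: rat)" if "a \<noteq> 0" "b \<noteq> 0" for a b
    using that by simp
  from this[OF nz[of "{..<j}"] nz[of "{j..<j + d}"]] show ?thesis
    by (simp only: prod_lessThan_add)
qed

lemma dlim_group_common_level: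
  assumes "\<forall>k. m k \<noteq> 0" "z \<in> dlim_group m" "z' \<in> dlim_group m"
  obtains J x x' where "z = of_int x / of_int (\<Prod>k<J. m k)" "z' = of_int x' / of_int (\<Prod>k<J. m k)"
proof -
  obtain x j x' j' where z: "z = of_int x / of_int (\<Prod>k<j. m k)"
    and z': "z' = of_int x' / of_int (\<Prod>k<j'. m k)"
    using assms(2,3) unfolding dlim_group_def by blast
  define J where "J = max j j'"
  have "J = j + (J - j)" "J = j' + (J - j')" by (simp_all add: J_def)
  then show ?thesis
    using that z z' dlim_fraction_lift[OF assms(1)] by metis
qed

lemma dlim_cone_iff:
  assumes sys: "embedding_system P m"
  shows "of_int x / of_int (\<Prod>k<j. m k) \<in> dlim_cone P m \<longleftrightarrow> x \<in> P j"
proof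
  assume "of_int x / of_int (\<Prod>k<j. m k) \<in> dlim_cone P m"
  then obtain y j' where y: "y \<in> P j'"
    and eq: "of_int x / of_int (\<Prod>k<j. m k) = (of_int y / of_int (\<Prod>k<j'. m k) :: rat)"
    unfolding dlim_cone_def by blast
  note nz = embedding_system_nonzero[OF sys]
  define J where "J = max j j'"
  define d d' where "d = J - j" and "d' = J - j'"
  have J: "j + d = J" "j' + d' = J" by (simp_all add: J_def d_def d'_def)
  have "(\<Prod>k<J. m k) \<noteq> 0" using nz by (simp add: prod_zero_iff)
  moreover have "of_int ((\<Prod>k\<in>{j..<j + d}. m k) * x) / of_int (\<Prod>k<J. m k)
      = (of_int ((\<Prod>k\<in>{j'..<j' + d'}. m k) * y) / of_int (\<Prod>k<J. m k) :: rat)"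
    using eq dlim_fraction_lift[OF nz, of x j d] dlim_fraction_lift[OF nz, of y j' d'] J by simp
  ultimately have "(\<Prod>k\<in>{j..<j + d}. m k) * x = (\<Prod>k\<in>{j'..<j' + d'}. m k) * y"
    by (simp only: divide_cancel_right of_int_eq_iff of_int_eq_0_iff simp_thms)
  then show "x \<in> P j"
    using embedding_system_iter[OF sys, of x j d] embedding_system_iter[OF sys, of y j' d'] y J
    by simp
qed (auto simp: dlim_cone_def)

lemma rank_one_dlim_group: "rank_one (dlim_group m)"
proof -
  have "(1::rat) = of_int 1 / of_int (\<Prod>k<0. m k)" by simp
  then have "1 \<in> dlim_group m" unfolding dlim_group_def by blast
  then have "(\<lambda>x. x) ` dlim_group m \<noteq> {0}" by auto
  then show ?thesis
    unfolding rank_one_def group_hom_on_def by (intro exI[of _ "\<lambda>x. x"]) simp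
qed

lemma dlim_cone_subset_group: "dlim_cone P m \<subseteq> dlim_group m"
  unfolding dlim_cone_def dlim_group_def by blast

lemma po_group_dlim:
  assumes sys: "embedding_system P m" and po: "\<And>j. po_group UNIV (P j)"
  shows "po_group (dlim_group m) (dlim_cone P m)"
  unfolding po_group_def
proof (intro conjI ballI allI impI)
  show "0 \<in> dlim_cone P m"
    using dlim_cone_iff[OF sys, of 0 0] po[of 0] unfolding po_group_def by simp
  then show "0 \<in> dlim_group m" using dlim_cone_subset_group by blast
  show "dlim_cone P m \<subseteq> dlim_group m" by (rule dlim_cone_subset_group)
  fix z z' assume "z \<in> dlim_group m" "z' \<in> dlim_group m"
  then obtain J x x' where "z = of_int x / of_int (\<Prod>k<J. m k)" "z' = of_int x' / of_int (\<Prod>k<J. m k)"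
    using dlim_group_common_level[OF embedding_system_nonzero[OF sys]] by blast
  then have "z + z' = of_int (x + x') / of_int (\<Prod>k<J. m k)"
    by (simp add: add_divide_distrib)
  then show "z + z' \<in> dlim_group m"
    unfolding dlim_group_def by blast
next
  fix z assume "z \<in> dlim_group m"
  then obtain x j where "z = of_int x / of_int (\<Prod>k<j. m k)"
    unfolding dlim_group_def by blast
  then have "- z = of_int (- x) / of_int (\<Prod>k<j. m k)" by simp
  then show "- z \<in> dlim_group m"
    unfolding dlim_group_def by blast
next
  fix z z' assume z: "z \<in> dlim_cone P m" and z': "z' \<in> dlim_cone P m"
  then obtain J x x' where zx: "z = of_int x / of_int (\<Prod>k<J. m k)"
    and zx': "z' = of_int x' / of_int (\<Prod>k<J. m k)"
    using dlim_group_common_level[OF embedding_system_nonzero[OF sys]] dlim_cone_subset_group by blast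
  then have "x + x' \<in> P J"
    using z z' dlim_cone_iff[OF sys] po[of J] unfolding po_group_def by blast
  moreover have "z + z' = of_int (x + x') / of_int (\<Prod>k<J. m k)"
    using zx zx' by (simp add: add_divide_distrib)
  ultimately show "z + z' \<in> dlim_cone P m" using dlim_cone_iff[OF sys] by metis
next
  fix z assume "z \<in> dlim_cone P m \<and> - z \<in> dlim_cone P m"
  then have "z \<in> dlim_cone P m" "- z \<in> dlim_cone P m" by blast+
  then obtain x j where zx: "z = of_int x / of_int (\<Prod>k<j. m k)" "x \<in> P j"
    unfolding dlim_cone_def by blast
  moreover have "- z = of_int (- x) / of_int (\<Prod>k<j. m k)" using zx(1) by simp
  ultimately have "- x \<in> P j" using \<open>- z \<in> dlim_cone P m\<close> dlim_cone_iff[OF sys] by metis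
  then show "z = 0" using zx po[of j] unfolding po_group_def by simp
qed

lemma order_unit_dlim:
  assumes sys: "embedding_system P m"
    and unit: "\<And>j a. a \<in> P j \<Longrightarrow> a \<noteq> 0 \<Longrightarrow> order_unit UNIV (P j) a"
    and u: "u \<in> dlim_cone P m" "u \<noteq> 0"
  shows "order_unit (dlim_group m) (dlim_cone P m) u"
proof -
  have "\<exists>k::nat. of_nat k * u - z \<in> dlim_cone P m \<and> z + of_nat k * u \<in> dlim_cone P m"
    if z: "z \<in> dlim_group m" for z
  proof -
    obtain J a b where ua: "u = of_int a / of_int (\<Prod>k<J. m k)" and zb: "z = of_int b / of_int (\<Prod>k<J. m k)"
      using dlim_group_common_level[OF embedding_system_nonzero[OF sys]] u(1) z dlim_cone_subset_group
      by blast
    have "a \<in> P J" "a \<noteq> 0" using u ua dlim_cone_iff[OF sys] by auto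
    then obtain k :: nat where k: "of_nat k * a - b \<in> P J" "b + of_nat k * a \<in> P J"
      using unit[of a J] unfolding order_unit_def by blast
    have "of_nat k * u - z = of_int (of_nat k * a - b) / of_int (\<Prod>k<J. m k)"
      "z + of_nat k * u = of_int (b + of_nat k * a) / of_int (\<Prod>k<J. m k)"
      using ua zb by (simp_all add: diff_divide_distrib add_divide_distrib)
    then show ?thesis using k dlim_cone_iff[OF sys] by metis
  qed
  then show ?thesis unfolding order_unit_def using u by blast
qed

lemma simple_po_group_dlim:
  assumes "embedding_system P m" "\<And>j. simple_component (P j)"
  shows "simple_po_group (dlim_group m) (dlim_cone P m)"
  using po_group_dlim[OF assms(1)] order_unit_dlim[OF assms(1)] assms(2)
  unfolding simple_po_group_def simple_component_def by blast

section \<open>The cones G i j and their limits\<close>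

locale grid_system =
  fixes r s :: int
    and n :: "nat \<Rightarrow> int"
    and P0 :: "nat \<Rightarrow> int set"
    and G :: "nat \<Rightarrow> nat \<Rightarrow> int set"
  assumes P0_system: "embedding_system P0 n"
    and P0_simple: "simple_component (P0 j)"
    and s_mem_P0: "s \<in> P0 0"
    and r_pos: "0 < r"
    and r_less_s: "r < s"
    and coprime_r_s: "coprime r s"
    and coprime_r_n: "coprime r (n j)"
    and G_0: "G 0 j = P0 j"
    and G_Suc_0: "G (Suc i) 0 = lin2 r (G i 0) (s ^ Suc i) (monoid_gen {r, s - r})"
    and G_Suc_Suc: "G (Suc i) (Suc j) = lin2 r (G i (Suc j)) (n j) (G (Suc i) j)"
begin

abbreviation B :: "int set" where
  "B \<equiv> monoid_gen {r, s - r}"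

lemma n_pos: "0 < n j"
  using P0_system unfolding embedding_system_def by blast

lemma n_nonzero: "n j \<noteq> 0"
  using n_pos less_irrefl by metis

lemma prod_n_nonzero: "(\<Prod>k\<in>A. n k) \<noteq> 0"
  using prod_pos[of A n] n_pos by (metis less_irrefl)

lemma prod_r_n: "(\<Prod>k<i. r * n k) = r ^ i * (\<Prod>k<i. n k)"
  by (simp add: prod.distrib)

lemma coprime_r_s_minus_r: "coprime r (s - r)"
  using coprime_r_s by (metis coprime_iff_gcd_eq_1 gcd.commute gcd_diff1)

lemma numerical_monoid_B: "numerical_monoid B"
  using numerical_monoid_monoid_gen_pair r_pos r_less_s coprime_r_s_minus_r by simp

lemma nonneg_B: "b \<in> B \<Longrightarrow> 0 \<le> b"
  using numerical_monoid_B unfolding numerical_monoid_def by blast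

lemma s_mem_B: "s \<in> B"
  using monoid_gen.add[OF monoid_gen.gen monoid_gen.gen, of r "{r, s - r}" "s - r"] by simp

lemma numerical_monoid_G: "numerical_monoid (G i j)"
proof (induction i arbitrary: j)
  case 0
  have "s \<in> P0 0 \<longleftrightarrow> (\<Prod>k\<in>{0..<j}. n k) * s \<in> P0 j"
    using embedding_system_iter[OF P0_system, of s 0 j] by simp
  moreover have "0 < (\<Prod>k\<in>{0..<j}. n k) * s"
    using n_pos r_pos r_less_s by (simp add: prod_pos)
  ultimately show ?case
    using simple_component_imp_numerical_monoid P0_simple s_mem_P0 G_0 by metis
next
  case (Suc i)
  note IH_row = Suc.IH
  show ?case
  proof (induction j)
    case 0
    show ?case
      unfolding G_Suc_0 using numerical_monoid_lin2[OF IH_row numerical_monoid_B] r_pos r_less_s coprime_r_s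
      by simp
  next
    case (Suc j)
    then show ?case
      unfolding G_Suc_Suc using numerical_monoid_lin2[OF IH_row] n_pos r_pos coprime_r_n by simp
  qed
qed

lemma positive_cone_G: "positive_cone (G i j)"
  using numerical_monoid_G unfolding numerical_monoid_def by blast

lemma nonneg_G: "x \<in> G i j \<Longrightarrow> 0 \<le> x"
  using numerical_monoid_G unfolding numerical_monoid_def by blast

lemma zero_mem_G: "0 \<in> G i j"
  using positive_cone.zero_mem[OF positive_cone_G] .

lemma add_mem_G: "x \<in> G i j \<Longrightarrow> y \<in> G i j \<Longrightarrow> x + y \<in> G i j"
  using positive_cone.add_mem[OF positive_cone_G] .

lemma mult_r_mem_G: "x \<in> G i j \<Longrightarrow> r * x \<in> G (Suc i) j"
  by (cases j) (simp_all add: G_Suc_0 G_Suc_Suc mult_mem_lin2I zero_mem_G monoid_gen.zero)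

lemma mult_n_mem_G:
  assumes "x \<in> G i j"
  shows "n j * x \<in> G i (Suc j)"
proof (cases i)
  case 0
  then show ?thesis using assms P0_system G_0 unfolding embedding_system_def by simp
next
  case (Suc i')
  then show ?thesis using assms by (simp add: G_Suc_Suc lin2_commute[of r] mult_mem_lin2I zero_mem_G)
qed

lemma s_pow_mult_mem_G:
  assumes "0 \<le> m"
  shows "s ^ Suc i * m \<in> G i 0"
proof (cases i)
  case 0
  then show ?thesis
    using positive_cone_int_mult_mem[OF positive_cone_G s_mem_P0[folded G_0] assms] by (simp add: mult.commute)
next
  case (Suc i')
  have "s * m \<in> B"
    using positive_cone_int_mult_mem[OF positive_cone_monoid_gen s_mem_B assms] by (simp add: mult.commute)
  then have "r * 0 + s ^ Suc i' * (s * m) \<in> G i 0"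
    unfolding Suc G_Suc_0 using mem_lin2I zero_mem_G by blast
  then show ?thesis by (simp add: Suc ac_simps)
qed

lemma embedding_system_G_row: "embedding_system (G i) n"
  unfolding embedding_system_def
proof (intro conjI allI)
  show "0 < n j" for j by (rule n_pos)
  show "x \<in> G i j \<longleftrightarrow> n j * x \<in> G i (Suc j)" for j x
  proof (induction i arbitrary: j x)
    case 0
    then show ?case using P0_system G_0 unfolding embedding_system_def by simp
  next
    case (Suc i)
    show ?case
    proof
      assume "n j * x \<in> G (Suc i) (Suc j)"
      then obtain x' y where "x' \<in> G (Suc i) j" "n j * y \<in> G i (Suc j)" "x = x' + r * y"
        using mult_mem_lin2D[of "n j" x _ r] coprime_r_n n_pos
        by (metis G_Suc_Suc lin2_commute coprime_commute less_irrefl)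
      then show "x \<in> G (Suc i) j" using Suc.IH mult_r_mem_G add_mem_G by auto
    qed (rule mult_n_mem_G)
  qed
qed

lemma embedding_system_G_column: "embedding_system (\<lambda>i. G i j) (\<lambda>_. r)"
  unfolding embedding_system_def
proof (intro conjI allI)
  show "0 < r" by (rule r_pos)
  show "x \<in> G i j \<longleftrightarrow> r * x \<in> G (Suc i) j" for i x
  proof (induction j arbitrary: i x)
    case 0
    show ?case
    proof
      assume "r * x \<in> G (Suc i) 0"
      moreover have "coprime r (s ^ Suc i)" using coprime_r_s by simp
      ultimately obtain x' y where "x' \<in> G i 0" "r * y \<in> B" "x = x' + s ^ Suc i * y"
        using mult_mem_lin2D r_pos unfolding G_Suc_0 by (metis less_irrefl)
      moreover have "0 \<le> y"
        using nonneg_B[OF \<open>r * y \<in> B\<close>] r_pos by (simp add: zero_le_mult_iff)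
      ultimately show "x \<in> G i 0" using s_pow_mult_mem_G add_mem_G by auto
    qed (rule mult_r_mem_G)
  next
    case (Suc j)
    show ?case
    proof
      assume "r * x \<in> G (Suc i) (Suc j)"
      then obtain x' y where "x' \<in> G i (Suc j)" "r * y \<in> G (Suc i) j" "x = x' + n j * y"
        using mult_mem_lin2D coprime_r_n r_pos unfolding G_Suc_Suc by (metis less_irrefl)
      then show "x \<in> G i (Suc j)" using Suc.IH mult_n_mem_G add_mem_G by auto
    qed (rule mult_r_mem_G)
  qed
qed

lemma embedding_system_G_diagonal: "embedding_system (\<lambda>i. G i i) (\<lambda>i. r * n i)"
  using embedding_system_G_row embedding_system_G_column n_pos r_pos
  unfolding embedding_system_def by (simp add: mult.assoc)

abbreviation lim_group :: "rat set" where
  "lim_group \<equiv> dlim_group (\<lambda>i. r * n i)"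

abbreviation lim_cone :: "rat set" where
  "lim_cone \<equiv> dlim_cone (\<lambda>i. G i i) (\<lambda>i. r * n i)"

lemma mem_G_iff_lim_cone:
  "x \<in> G i j \<longleftrightarrow> of_int x / of_int (r ^ i * (\<Prod>k<j. n k)) \<in> lim_cone"
proof -
  define R where "R = (\<Prod>k\<in>{j..<j + i}. n k)"
  have "x \<in> G i j \<longleftrightarrow> r ^ j * x \<in> G (i + j) j"
    using embedding_system_iter[OF embedding_system_G_column, of x i j] by simp
  also have "\<dots> \<longleftrightarrow> R * (r ^ j * x) \<in> G (i + j) (i + j)"
    using embedding_system_iter[OF embedding_system_G_row[of "i + j"], of "r ^ j * x" j i]
    by (simp add: R_def add.commute)
  also have "\<dots> \<longleftrightarrow> of_int (R * (r ^ j * x)) / of_int (\<Prod>k<i + j. r * n k) \<in> lim_cone"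
    by (rule dlim_cone_iff[OF embedding_system_G_diagonal, symmetric])
  also have "of_int (R * (r ^ j * x)) / of_int (\<Prod>k<i + j. r * n k)
      = (of_int x / of_int (r ^ i * (\<Prod>k<j. n k)) :: rat)"
  proof -
    have "(\<Prod>k<i + j. r * n k) = (r ^ i * (\<Prod>k<j. n k)) * (R * r ^ j)"
      using prod_lessThan_add[of n j i]
      by (simp add: prod.distrib R_def power_add add.commute ac_simps)
    moreover have "R * r ^ j \<noteq> 0" using r_pos prod_n_nonzero by (simp add: R_def)
    ultimately show ?thesis using r_pos by (simp add: ac_simps)
  qed
  finally show ?thesis .
qed

lemma simple_po_group_lim: "simple_po_group lim_group lim_cone"
  using simple_po_group_dlim[OF embedding_system_G_diagonal]
    numerical_monoid_imp_simple_component[OF numerical_monoid_G] .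

lemma order_embedding_H_lim:
  "order_embedding (dlim_group n) (dlim_cone P0 n) lim_group lim_cone (\<lambda>x. x)"
  unfolding order_embedding_inclusion
proof
  have "of_int x / of_int (\<Prod>k<j. n k) = (of_int (r ^ j * x) / of_int (\<Prod>k<j. r * n k) :: rat)" for x j
    using r_pos by (simp add: prod_r_n)
  then show "dlim_group n \<subseteq> lim_group"
    unfolding dlim_group_def by blast
  have "z \<in> dlim_cone P0 n \<longleftrightarrow> z \<in> lim_cone" if "z = of_int x / of_int (\<Prod>k<j. n k)" for z x j
    using that dlim_cone_iff[OF P0_system] mem_G_iff_lim_cone[of x 0 j] G_0 by simp
  then show "dlim_cone P0 n = dlim_group n \<inter> lim_cone"
    unfolding dlim_group_def using dlim_cone_def by blast
qed

lemma order_embedding_K_lim: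
  "order_embedding (dlim_group (\<lambda>_. r)) (dlim_cone (\<lambda>i. G i 0) (\<lambda>_. r)) lim_group lim_cone (\<lambda>x. x)"
  unfolding order_embedding_inclusion
proof
  have "of_int x / of_int (\<Prod>k<j. r) = (of_int ((\<Prod>k<j. n k) * x) / of_int (\<Prod>k<j. r * n k) :: rat)"
    for x and j :: nat
    using n_nonzero r_pos by (simp add: prod_r_n)
  then show "dlim_group (\<lambda>_. r) \<subseteq> lim_group"
    unfolding dlim_group_def by blast
  have "z \<in> dlim_cone (\<lambda>i. G i 0) (\<lambda>_. r) \<longleftrightarrow> z \<in> lim_cone"
    if "z = of_int x / of_int (\<Prod>k<j. r)" for z x and j :: nat
    using that dlim_cone_iff[OF embedding_system_G_column] mem_G_iff_lim_cone[of x j 0] by simp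
  then show "dlim_cone (\<lambda>i. G i 0) (\<lambda>_. r) = dlim_group (\<lambda>_. r) \<inter> lim_cone"
    unfolding dlim_group_def using dlim_cone_def by blast
qed

section \<open>The interval D\<close>

definition \<sigma> :: rat where
  "\<sigma> = of_int s / of_int r"

definition w :: "nat \<Rightarrow> rat" where
  "w k = of_int r * \<sigma> ^ Suc k"

lemma r_mult_\<sigma>: "of_int r * \<sigma> = of_int s"
  using r_pos by (simp add: \<sigma>_def)

lemma r_pow_mult_\<sigma>_pow: "of_int r ^ k * \<sigma> ^ k = of_int s ^ k"
  by (simp add: r_mult_\<sigma> flip: power_mult_distrib)

lemma r_pow_mult_\<sigma>_pow_Suc: "of_int r ^ k * \<sigma> ^ Suc k = of_int (s ^ Suc k) / of_int r"
  using r_pos r_pow_mult_\<sigma>_pow[of "Suc k"] by (simp add: field_simps)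

lemma \<sigma>_pos: "0 < \<sigma>"
  using r_pos r_less_s by (simp add: \<sigma>_def)

text \<open>An over-approximation of the part of the limit cone reached after I steps in the first
  index: the recursion for G (i + 1) 0 contributes the summands \<sigma>^i b with b \<in> B, 1 \<le> i \<le> I,
  and everything else has denominator prime to r (lemma G_div_mem_sigma_cone).\<close>
primrec sigma_cone :: "nat \<Rightarrow> rat set" where
  "sigma_cone 0 = {z. 0 \<le> z \<and> coprime_denom r z}"
| "sigma_cone (Suc I) = {y + \<sigma> ^ Suc I * of_int b | y b. y \<in> sigma_cone I \<and> b \<in> B}"

lemma sigma_cone_SucI: "y \<in> sigma_cone I \<Longrightarrow> b \<in> B \<Longrightarrow> y + \<sigma> ^ Suc I * of_int b \<in> sigma_cone (Suc I)"
  by auto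

lemma sigma_cone_SucE:
  assumes "z \<in> sigma_cone (Suc I)"
  obtains y b where "y \<in> sigma_cone I" "b \<in> B" "z = y + \<sigma> ^ Suc I * of_int b"
  using assms by auto

declare sigma_cone.simps(2) [simp del]

lemma nonneg_sigma_cone: "z \<in> sigma_cone I \<Longrightarrow> 0 \<le> z"
proof (induction I arbitrary: z)
  case (Suc I)
  then obtain y b where "y \<in> sigma_cone I" "b \<in> B" "z = y + \<sigma> ^ Suc I * of_int b"
    by (blast elim: sigma_cone_SucE)
  then show ?case using Suc.IH \<sigma>_pos nonneg_B by simp
qed simp

lemma add_mem_sigma_cone: "z \<in> sigma_cone I \<Longrightarrow> z' \<in> sigma_cone I \<Longrightarrow> z + z' \<in> sigma_cone I"
proof (induction I arbitrary: z z')
  case 0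
  then show ?case by (simp add: coprime_denom_add)
next
  case (Suc I)
  obtain y b y' b' where "y \<in> sigma_cone I" "b \<in> B" "z = y + \<sigma> ^ Suc I * of_int b"
    "y' \<in> sigma_cone I" "b' \<in> B" "z' = y' + \<sigma> ^ Suc I * of_int b'"
    using Suc.prems by (metis sigma_cone_SucE)
  then show ?case
    using sigma_cone_SucI[of "y + y'" I "b + b'"] Suc.IH monoid_gen.add
    by (simp add: algebra_simps)
qed

lemma sigma_cone_mono: "I \<le> J \<Longrightarrow> sigma_cone I \<subseteq> sigma_cone J"
proof (induction J rule: dec_induct)
  case (step J)
  then show ?case using sigma_cone_SucI[of _ J 0] monoid_gen.zero by auto
qed simp

lemma sigma_cone_add_\<sigma>_pow: "y \<in> sigma_cone I \<Longrightarrow> b \<in> B \<Longrightarrow> y + \<sigma> ^ I * of_int b \<in> sigma_cone I"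
proof (cases I)
  case 0
  assume "y \<in> sigma_cone I" "b \<in> B"
  moreover have "0 \<le> b" using nonneg_B \<open>b \<in> B\<close> by blast
  ultimately show ?thesis
    using 0 add_mem_sigma_cone[of y 0 "of_int b"] by (simp add: coprime_denom_of_int)
next
  case (Suc I')
  assume "y \<in> sigma_cone I" "b \<in> B"
  then obtain y' b' where "y' \<in> sigma_cone I'" "b' \<in> B" "y = y' + \<sigma> ^ I * of_int b'"
    unfolding Suc by (blast elim: sigma_cone_SucE)
  then show ?thesis
    using sigma_cone_SucI[of y' I' "b' + b"] \<open>b \<in> B\<close> monoid_gen.add
    by (simp add: Suc algebra_simps)
qed

lemma coprime_denom_sigma_cone: "z \<in> sigma_cone I \<Longrightarrow> coprime_denom r (of_int r ^ I * z)"
proof (induction I arbitrary: z)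
  case (Suc I)
  then obtain y b where "y \<in> sigma_cone I" "z = y + \<sigma> ^ Suc I * of_int b"
    by (blast elim: sigma_cone_SucE)
  moreover have "of_int r ^ Suc I * (y + \<sigma> ^ Suc I * of_int b)
      = of_int r * (of_int r ^ I * y) + of_int (s ^ Suc I * b)"
    using r_pow_mult_\<sigma>_pow[of "Suc I"] by (simp add: algebra_simps)
  ultimately show ?case
    using Suc.IH coprime_denom_add coprime_denom_mult_of_int coprime_denom_of_int by metis
qed simp

text \<open>One level can be stripped as soon as r^I z has denominator prime to r: the B-coefficient
  at level I + 1 is then divisible by r, and r \<sigma>^(I+1) = s \<sigma>^I moves it down a level.\<close>
lemma sigma_cone_Suc_strip:
  assumes z: "z \<in> sigma_cone (Suc I)" and denom: "coprime_denom r (of_int r ^ I * z)"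
  shows "z \<in> sigma_cone I"
proof -
  obtain y b where y: "y \<in> sigma_cone I" and b: "b \<in> B" and zyb: "z = y + \<sigma> ^ Suc I * of_int b"
    using z by (blast elim: sigma_cone_SucE)
  have "of_int (s ^ Suc I * b) / of_int r = of_int r ^ I * z - of_int r ^ I * y"
    using r_pow_mult_\<sigma>_pow_Suc[of I] by (simp add: zyb algebra_simps)
  then have "r dvd s ^ Suc I * b"
    using coprime_denom_imp_dvd coprime_denom_diff[OF denom coprime_denom_sigma_cone[OF y]] r_pos
    by (metis less_irrefl)
  then obtain b' where b': "b = r * b'"
    using coprime_r_s by (metis coprime_dvd_mult_right_iff coprime_power_right_iff dvdE)
  have "0 \<le> b'"
    using nonneg_B[OF b] b' r_pos by (simp add: zero_le_mult_iff)
  then have "s * b' \<in> B"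
    using positive_cone_int_mult_mem[OF positive_cone_monoid_gen s_mem_B] by (simp add: mult.commute)
  moreover have "z = y + \<sigma> ^ I * of_int (s * b')"
    using zyb b' r_mult_\<sigma> by (simp add: algebra_simps flip: r_mult_\<sigma>)
  ultimately show ?thesis using sigma_cone_add_\<sigma>_pow[OF y] by metis
qed

lemma sigma_cone_strip:
  assumes "z \<in> sigma_cone J" "coprime_denom r (of_int r ^ I * z)"
  shows "z \<in> sigma_cone I"
proof (cases "J \<le> I")
  case True
  then show ?thesis using assms(1) sigma_cone_mono by blast
next
  case False
  then obtain d where "J = I + d" by (metis le_add_diff_inverse nat_le_linear)
  then show ?thesis using assms(1)
  proof (induction d arbitrary: J)
    case (Suc d)
    have "coprime_denom r (of_int r ^ (I + d) * z)"
      using coprime_denom_mult_of_int[OF assms(2), of "r ^ d"] by (simp add: power_add ac_simps)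
    then show ?case using Suc sigma_cone_Suc_strip by simp
  qed simp
qed

lemma G_div_mem_sigma_cone: "x \<in> G i j \<Longrightarrow> of_int x / of_int (r ^ i * (\<Prod>k<j. n k)) \<in> sigma_cone i"
proof (induction i arbitrary: j x)
  case 0
  define d where "d = (\<Prod>k<j. n k)"
  have "coprime d r"
    unfolding d_def using prod_coprime_left coprime_r_n by (metis coprime_commute)
  moreover have "0 < d" unfolding d_def using n_pos by (simp add: prod_pos)
  moreover have "0 \<le> x" using 0 nonneg_G by blast
  ultimately have "0 \<le> (of_int x / of_int d :: rat)" "coprime_denom r (of_int x / of_int d)"
    unfolding coprime_denom_def by auto
  then show ?case by (simp add: d_def)
next
  case (Suc i)
  note IH_row = Suc.IH
  from Suc.prems show ?case
  proof (induction j arbitrary: x)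
    case 0
    then obtain a b where x: "x = r * a + s ^ Suc i * b" and a: "a \<in> G i 0" and b: "b \<in> B"
      unfolding G_Suc_0 lin2_def by blast
    have "of_int (r * a + s ^ Suc i * b) / of_int (r ^ Suc i * (\<Prod>k<0. n k))
        = (of_int a / of_int (r ^ i * (\<Prod>k<0. n k)) + \<sigma> ^ Suc i * of_int b :: rat)"
      using r_pos by (simp add: \<sigma>_def field_simps power_divide)
    then show ?case using sigma_cone_SucI[OF IH_row[OF a] b] by (simp only: x)
  next
    case (Suc j)
    then obtain a b where x: "x = r * a + n j * b" and a: "a \<in> G i (Suc j)" and b: "b \<in> G (Suc i) j"
      unfolding G_Suc_Suc lin2_def by blast
    have "(of_int (r * a + m * b) :: rat) / of_int (r ^ Suc i * (N * m))
        = of_int a / of_int (r ^ i * (N * m)) + of_int b / of_int (r ^ Suc i * N)"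
      if "N \<noteq> 0" "m \<noteq> 0" for N m
      using that r_pos by (simp add: field_simps)
    from this[OF prod_n_nonzero n_nonzero]
    have "of_int x / of_int (r ^ Suc i * (\<Prod>k<Suc j. n k))
        = (of_int a / of_int (r ^ i * (\<Prod>k<Suc j. n k)) + of_int b / of_int (r ^ Suc i * (\<Prod>k<j. n k)) :: rat)"
      by (simp only: x prod.lessThan_Suc)
    moreover have "of_int a / of_int (r ^ i * (\<Prod>k<Suc j. n k)) \<in> sigma_cone (Suc i)"
      using IH_row[OF a] sigma_cone_mono[of i "Suc i"] by auto
    ultimately show ?case using add_mem_sigma_cone Suc.IH[OF b] by simp
  qed
qed

lemma lim_cone_imp_sigma_cone:
  assumes "z \<in> lim_cone"
  obtains I where "z \<in> sigma_cone I"
proof -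
  obtain x i where "x \<in> G i i" "z = of_int x / of_int (\<Prod>k<i. r * n k)"
    using assms unfolding dlim_cone_def by blast
  then show ?thesis using that G_div_mem_sigma_cone by (metis prod_r_n)
qed

lemma positive_cone_lim_cone: "positive_cone lim_cone"
  using simple_po_group_lim unfolding simple_po_group_def po_group_def positive_cone_def by blast

lemma P0_0_mem_lim_cone: "x \<in> P0 0 \<Longrightarrow> of_int x \<in> lim_cone"
  using mem_G_iff_lim_cone[of x 0 0] G_0 by simp

lemma mult_s_mem_lim_cone:
  assumes "0 \<le> c"
  shows "of_int (c * s) \<in> lim_cone"
proof -
  have "c * s \<in> P0 0"
    using positive_cone_int_mult_mem[OF positive_cone_G s_mem_P0[folded G_0] assms] G_0 by simp
  then show ?thesis by (rule P0_0_mem_lim_cone)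
qed

lemma \<sigma>_pow_mult_mem_lim_cone:
  assumes "b \<in> B"
  shows "\<sigma> ^ Suc i * of_int b \<in> lim_cone"
proof -
  have "r * 0 + s ^ Suc i * b \<in> G (Suc i) 0"
    unfolding G_Suc_0 using mem_lin2I zero_mem_G assms by blast
  then have "of_int (s ^ Suc i * b) / of_int (r ^ Suc i) \<in> lim_cone"
    using mem_G_iff_lim_cone by simp
  moreover have "of_int (s ^ Suc i * b) / of_int (r ^ Suc i) = \<sigma> ^ Suc i * (of_int b :: rat)"
    by (simp add: \<sigma>_def power_divide)
  ultimately show ?thesis by simp
qed

lemma w_0: "w 0 = of_int s"
  by (simp add: w_def r_mult_\<sigma>)

lemma w_increment: "w (Suc k) - w k = \<sigma> ^ Suc k * of_int (s - r)"
  by (simp add: w_def algebra_simps flip: r_mult_\<sigma>)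

lemma w_chain: "po_le lim_cone (w k) (w (Suc k))"
  unfolding po_le_def w_increment by (rule \<sigma>_pow_mult_mem_lim_cone) (simp add: monoid_gen.gen)

lemma w_mem_lim_cone: "w k \<in> lim_cone"
proof (induction k)
  case 0
  then show ?case using P0_0_mem_lim_cone s_mem_P0 by (simp add: w_0)
next
  case (Suc k)
  then show ?case
    using w_chain positive_cone.add_mem[OF positive_cone_lim_cone] unfolding po_le_def
    by (metis diff_add_cancel)
qed

text \<open>u = s (s - r) is the first increment r (w 1 - w 0); since the increments grow,
  r w k dominates k u, and u is an order unit.\<close>
lemma unit_below_r_w_increment: "po_le lim_cone (of_int (s * (s - r))) (of_int r * (w (Suc k) - w k))"
proof (induction k)
  case 0
  then show ?case
    using positive_cone.po_le_refl[OF positive_cone_lim_cone]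
    by (simp add: w_increment algebra_simps flip: r_mult_\<sigma>)
next
  case (Suc k)
  have "of_int r * (w (Suc (Suc k)) - w (Suc k)) - of_int r * (w (Suc k) - w k)
      = \<sigma> ^ Suc k * of_int ((s - r) * (s - r))"
    by (simp add: w_increment algebra_simps flip: r_mult_\<sigma>)
  moreover have "(s - r) * (s - r) \<in> B"
    by (rule positive_cone_int_mult_mem[OF positive_cone_monoid_gen]) (use r_less_s in \<open>auto intro: monoid_gen.gen\<close>)
  ultimately have "po_le lim_cone (of_int r * (w (Suc k) - w k)) (of_int r * (w (Suc (Suc k)) - w (Suc k)))"
    unfolding po_le_def using \<sigma>_pow_mult_mem_lim_cone by presburger
  then show ?case using Suc positive_cone.po_le_trans[OF positive_cone_lim_cone] by blast
qed

lemma multiple_unit_below_r_w: "po_le lim_cone (of_nat k * of_int (s * (s - r))) (of_int r * w k)"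
proof (induction k)
  case 0
  show ?case using mult_s_mem_lim_cone[of r] r_pos unfolding po_le_def by (simp add: w_0)
next
  case (Suc k)
  let ?u = "of_int (s * (s - r)) :: rat"
  have "po_le lim_cone (of_nat k * ?u + ?u) (of_int r * w k + of_int r * (w (Suc k) - w k))"
    using positive_cone.po_le_add[OF positive_cone_lim_cone Suc unit_below_r_w_increment] .
  moreover have "of_nat k * ?u + ?u = of_nat (Suc k) * ?u" by (simp add: algebra_simps)
  moreover have "of_int r * w k + of_int r * (w (Suc k) - w k) = of_int r * w (Suc k)"
    by (simp add: algebra_simps)
  ultimately show ?case by (simp only:)
qed

lemma lim_cone_below_r_w:
  assumes "z \<in> lim_cone"
  obtains k where "po_le lim_cone z (of_int r * w k)"
proof -
  have "of_int (s * (s - r)) \<in> lim_cone"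
    using mult_s_mem_lim_cone[of "s - r"] r_less_s by (simp add: mult.commute)
  moreover have "of_int (s * (s - r)) \<noteq> (0::rat)" using r_pos r_less_s by simp
  ultimately have "order_unit lim_group lim_cone (of_int (s * (s - r)))"
    using simple_po_group_lim unfolding simple_po_group_def by blast
  moreover have "z \<in> lim_group"
    using assms dlim_cone_def dlim_group_def by blast
  ultimately obtain k :: nat where "po_le lim_cone z (of_nat k * of_int (s * (s - r)))"
    unfolding order_unit_def po_le_def by blast
  then show ?thesis
    using that positive_cone.po_le_trans[OF positive_cone_lim_cone] multiple_unit_below_r_w by blast
qed

lemma coprime_denom_w_multiple_minus_rs:
  "coprime_denom r (of_int r ^ k * (of_nat t * w k - of_int (r * s)))"
proof -
  have "of_int r ^ k * (of_nat t * w k - of_int (r * s)) = (of_int (int t * s ^ Suc k - r ^ Suc k * s) :: rat)"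
    using r_pow_mult_\<sigma>_pow[of "Suc k"] by (simp add: w_def algebra_simps)
  then show ?thesis using coprime_denom_of_int by metis
qed

lemma w_multiple_minus_rs_coefficient_dvd:
  assumes y: "y \<in> sigma_cone k"
    and zyb: "of_nat t * w (Suc k) - of_int (r * s) = y + \<sigma> ^ Suc k * of_int b"
  shows "r dvd b - int t * (s - r)"
proof -
  have y_eq: "y = of_nat t * w (Suc k) - of_int (r * s) - \<sigma> ^ Suc k * of_int b"
    using zyb by simp
  have "of_int (s ^ Suc k * (b - int t * s)) / of_int r
      = (of_int (s ^ Suc k) / of_int r * of_int (b - int t * s) :: rat)"
    using r_pos by (simp add: field_simps)
  also have "\<dots> = of_int r ^ k * \<sigma> ^ Suc k * of_int (b - int t * s)"
    by (simp only: r_pow_mult_\<sigma>_pow_Suc)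
  also have "\<dots> = of_int (- 1) * (of_int r ^ k * y) - of_int (r ^ Suc k * s)"
    unfolding y_eq w_def by (simp add: algebra_simps flip: r_mult_\<sigma>)
  finally have "r dvd s ^ Suc k * (b - int t * s)"
    using r_pos coprime_denom_imp_dvd coprime_denom_diff[OF coprime_denom_mult_of_int
        [OF coprime_denom_sigma_cone[OF y]] coprime_denom_of_int]
    by (metis less_irrefl)
  then have "r dvd (b - int t * s) + r * int t"
    using coprime_r_s by (simp add: coprime_dvd_mult_right_iff)
  moreover have "(b - int t * s) + r * int t = b - int t * (s - r)" by (simp add: algebra_simps)
  ultimately show ?thesis by (simp only:)
qed

lemma w_multiple_minus_rs_strip:
  assumes z: "of_nat t * w (Suc k) - of_int (r * s) \<in> sigma_cone (Suc k)" and t: "int t < r"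
  shows "of_nat t * w k - of_int (r * s) \<in> sigma_cone k"
proof -
  obtain y b where y: "y \<in> sigma_cone k" and b: "b \<in> B"
    and zyb: "of_nat t * w (Suc k) - of_int (r * s) = y + \<sigma> ^ Suc k * of_int b"
    using z by (blast elim: sigma_cone_SucE)
  have "b - int t * (s - r) \<in> B"
    using monoid_gen_pair_diff_mem[OF b coprime_r_s_minus_r] w_multiple_minus_rs_coefficient_dvd[OF y zyb] t
    by simp
  then have "y + \<sigma> ^ Suc k * of_int (b - int t * (s - r)) \<in> sigma_cone (Suc k)"
    using sigma_cone_SucI[OF y] by blast
  moreover have "y + \<sigma> ^ Suc k * of_int (b - int t * (s - r)) = of_nat t * w k - of_int (r * s)"
  proof -
    have y_eq: "y = of_nat t * w (Suc k) - of_int (r * s) - \<sigma> ^ Suc k * of_int b"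
      using zyb by simp
    have w_k: "w k = w (Suc k) - \<sigma> ^ Suc k * of_int (s - r)"
      using w_increment[of k] by simp
    show ?thesis unfolding y_eq w_k by (simp add: algebra_simps)
  qed
  ultimately have "of_nat t * w k - of_int (r * s) \<in> sigma_cone (Suc k)" by simp
  then show ?thesis by (rule sigma_cone_strip[OF _ coprime_denom_w_multiple_minus_rs])
qed

lemma w_multiple_minus_rs_notin_sigma_cone:
  assumes t: "int t < r"
  shows "of_nat t * w k - of_int (r * s) \<notin> sigma_cone k"
proof (induction k)
  case 0
  have "of_nat t * w 0 - of_int (r * s) = (of_int ((int t - r) * s) :: rat)"
    by (simp add: w_0 algebra_simps)
  moreover have "(of_int ((int t - r) * s) :: rat) < 0"
    unfolding of_int_less_0_iff using t r_pos r_less_s by (simp add: mult_neg_pos)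
  ultimately have "of_nat t * w 0 - of_int (r * s) < (0::rat)" by (simp only:)
  then show ?case using nonneg_sigma_cone by (meson not_le)
next
  case (Suc k)
  then show ?case using w_multiple_minus_rs_strip t by blast
qed

lemma rs_not_below_w_multiple:
  assumes "int t < r"
  shows "\<not> po_le lim_cone (of_int (r * s)) (of_nat t * w k)"
proof
  assume "po_le lim_cone (of_int (r * s)) (of_nat t * w k)"
  then obtain I where "of_nat t * w k - of_int (r * s) \<in> sigma_cone I"
    unfolding po_le_def by (blast elim: lim_cone_imp_sigma_cone)
  then show False
    using sigma_cone_strip coprime_denom_w_multiple_minus_rs
      w_multiple_minus_rs_notin_sigma_cone[OF assms] by blast
qed

lemma exists_interval_r_fold_sum:
  "\<exists>D. is_interval lim_cone D
     \<and> (\<forall>t::nat. 1 \<le> t \<and> int t \<le> r - 1 \<longrightarrow> iv_mult lim_cone D t \<noteq> lim_cone)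
     \<and> iv_mult lim_cone D (nat r) = lim_cone"
proof -
  define D where "D = {z \<in> lim_cone. \<exists>k. po_le lim_cone z (w k)}"
  note multiple = positive_cone.iv_mult_below_chain[OF positive_cone_lim_cone, of w, OF w_mem_lim_cone w_chain]
  have "is_interval lim_cone D"
    unfolding D_def
    by (rule positive_cone.is_interval_below_chain[OF positive_cone_lim_cone, of w, OF w_mem_lim_cone w_chain])
  moreover have "iv_mult lim_cone D t \<noteq> lim_cone" if t: "1 \<le> t \<and> int t \<le> r - 1" for t
  proof -
    obtain t' where t': "t = Suc t'" using t by (cases t) auto
    have "of_int (r * s) \<notin> iv_mult lim_cone D t"
      unfolding D_def t' multiple using rs_not_below_w_multiple[of t] t t' by auto
    then show ?thesis using mult_s_mem_lim_cone[of r] r_pos by auto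
  qed
  moreover have "iv_mult lim_cone D (nat r) = lim_cone"
  proof -
    have "nat r = Suc (nat r - 1)" and "of_nat (nat r) = (of_int r :: rat)" using r_pos by simp_all
    then have "iv_mult lim_cone D (nat r) = {z \<in> lim_cone. \<exists>k. po_le lim_cone z (of_int r * w k)}"
      unfolding D_def using multiple[of "nat r - 1"] by simp
    then show ?thesis using lim_cone_below_r_w by blast
  qed
  ultimately show ?thesis by blast
qed

end

theorem proposition3p3:
  fixes p q r s :: int
    and n :: "nat \<Rightarrow> int"
    and P0 :: "nat \<Rightarrow> int set"
    and G :: "nat \<Rightarrow> nat \<Rightarrow> int set"
  assumes pq: "0 < p" "0 < q" "1 < q" "q < p - q" "gcd p q = 1"
    and n_pos: "\<forall>j. 0 < n j"
    and P0_simple: "\<forall>j. simple_component (P0 j)"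
    and P0_0: "P0 0 = monoid_gen {q, p - q}"
    and P0_emb: "\<forall>j. order_embedding (UNIV :: int set) (P0 j) (UNIV :: int set) (P0 (Suc j)) (\<lambda>x. n j * x)"
    and r_pos: "0 < r" and r_gt: "q < r"
    and r_cop: "coprime_gen r n"
    and s_in: "s \<in> monoid_gen {q, p - q}"
    and rs: "gcd r s = 1" "r < s - r"
    and G_0j: "\<forall>j. G 0 j = P0 j"
    and G_i0: "\<forall>i. G (Suc i) 0 = lin2 r (G i 0) (s ^ Suc i) (monoid_gen {r, s - r})"
    and G_ij: "\<forall>i j. G (Suc i) (Suc j) = lin2 r (G i (Suc j)) (n j) (G (Suc i) j)"
  shows
    "(\<forall>i j. simple_component (G i j))
     \<and> (\<forall>i j. order_embedding (UNIV :: int set) (G i j) (UNIV :: int set) (G i (Suc j)) (\<lambda>x. n j * x)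
             \<and> order_embedding (UNIV :: int set) (G i j) (UNIV :: int set) (G (Suc i) j) (\<lambda>x. r * x))
     \<and> (simple_po_group (dlim_group (\<lambda>i. r * n i)) (dlim_cone (\<lambda>i. G i i) (\<lambda>i. r * n i))
        \<and> rank_one (dlim_group (\<lambda>i. r * n i))
        \<and> (\<exists>\<phi>. order_embedding (dlim_group n) (dlim_cone P0 n)
                 (dlim_group (\<lambda>i. r * n i)) (dlim_cone (\<lambda>i. G i i) (\<lambda>i. r * n i)) \<phi>)
        \<and> (\<exists>\<psi>. order_embedding (dlim_group (\<lambda>_. r)) (dlim_cone (\<lambda>i. G i 0) (\<lambda>_. r))
                 (dlim_group (\<lambda>i. r * n i)) (dlim_cone (\<lambda>i. G i i) (\<lambda>i. r * n i)) \<psi>))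
     \<and> (\<exists>D. is_interval (dlim_cone (\<lambda>i. G i i) (\<lambda>i. r * n i)) D
            \<and> (\<forall>t::nat. 1 \<le> t \<and> int t \<le> r - 1 \<longrightarrow>
                 iv_mult (dlim_cone (\<lambda>i. G i i) (\<lambda>i. r * n i)) D t \<noteq> dlim_cone (\<lambda>i. G i i) (\<lambda>i. r * n i))
            \<and> iv_mult (dlim_cone (\<lambda>i. G i i) (\<lambda>i. r * n i)) D (nat r) = dlim_cone (\<lambda>i. G i i) (\<lambda>i. r * n i))"
proof -
  interpret grid_system r s n P0 G
  proof
    show "embedding_system P0 n"
      using n_pos P0_emb unfolding embedding_system_iff_order_embedding by blast
    show "coprime r s" using rs(1) by (simp add: coprime_iff_gcd_eq_1)
    show "coprime r (n j)" for j using r_cop by (rule coprime_gen_imp_coprime)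
  qed (use P0_simple P0_0 s_in r_pos rs(2) G_0j G_i0 G_ij in auto)
  have "order_embedding UNIV (G i j) UNIV (G i (Suc j)) (\<lambda>x. n j * x)"
    and "order_embedding UNIV (G i j) UNIV (G (Suc i) j) (\<lambda>x. r * x)" for i j
    using embedding_system_G_row[of i] embedding_system_G_column[of j]
    unfolding embedding_system_iff_order_embedding by blast+
  then show ?thesis
    using numerical_monoid_imp_simple_component[OF numerical_monoid_G] simple_po_group_lim
      rank_one_dlim_group order_embedding_H_lim order_embedding_K_lim exists_interval_r_fold_sum
    by blast
qed

end
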